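(* For every $n \geq 1$, every $c \in \{1,\ldots,n\}$ and every $p=(p_1,\ldots,p_n) \in (0,1)^n$ with $p_1 + \cdots + p_n \leq 1$, $$\mathbb{E}(T_{c,n}(p)) \geq \mathbb{E}(T_{c,n}(v)) \geq \mathbb{E}(T_{c,n}(u)),$$ where $p_0 = 1 - (p_1 + \cdots + p_n)$, $v = (v_1,\ldots,v_n)$ with $v_i = (1-p_0)/n$, and $u = (1/n,\ldots,1/n)$.
   Context: For a vector $q=(q_1,\ldots,q_n)$ of nonnegative reals with $q_1+\cdots+q_n\le 1$, let $q_0 = 1-(q_1+\cdots+q_n)$; coupons are drawn independently, one at each time $1,2,\ldots$, from $\{0,1,\ldots,n\}$, coupon $i$ with probability $q_i$, and coupon $0$ never belongs to the collection. $T_{c,n}(q)$ is the number of draws needed until $c$ distinct coupons among $\{1,\ldots,n\}$ have first been drawn. *)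

theory Defs
  imports "HOL-Probability.Probability"
begin

definition coupon_dist :: "nat \<Rightarrow> (nat \<Rightarrow> real) \<Rightarrow> nat pmf" where
  "coupon_dist n q = embed_pmf (\<lambda>i. if i = 0 then 1 - (\<Sum>j=1..n. q j)
                                     else if i \<le> n then q i else 0)"

text \<open>Independent draws: the draw at time t (t = 1,2,...) is omega (t - 1).\<close>
definition draws :: "nat \<Rightarrow> (nat \<Rightarrow> real) \<Rightarrow> (nat \<Rightarrow> nat) measure" where
  "draws n q = (\<Pi>\<^sub>M t\<in>(UNIV::nat set). measure_pmf (coupon_dist n q))"

definition T_cn :: "nat \<Rightarrow> nat \<Rightarrow> (nat \<Rightarrow> nat) \<Rightarrow> ennreal" where
  "T_cn c n \<omega> = (if \<exists>t. c \<le> card (\<omega> ` {..<t} \<inter> {1..n})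
                  then of_nat (LEAST t. c \<le> card (\<omega> ` {..<t} \<inter> {1..n}))
                  else \<top>)"

definition ET :: "nat \<Rightarrow> nat \<Rightarrow> (nat \<Rightarrow> real) \<Rightarrow> ennreal" where
  "ET c n q = (\<integral>\<^sup>+ \<omega>. T_cn c n \<omega> \<partial>draws n q)"

end

theory Submission
  imports Defs
begin

text \<open>
  Since \<open>E T = \<Sum>\<^sub>t P(T > t)\<close>, it suffices to compare the probabilities \<open>P(T > t)\<close>.
  Such a probability is a sum over all words of length \<open>t\<close> in the coupons \<open>0, \<dots>, n\<close>
  of the product of the weights of the letters, restricted to words that contain fewer
  than \<open>c\<close> real coupons. Group these words according to the word obtained by renaming
  coupon \<open>j\<close> to \<open>i\<close>: if the merged letter occurs \<open>m\<close> times, its group contributes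
  \<open>x\<^sup>m + y\<^sup>m\<close> times the value with only one of \<open>i, j\<close> seen and
  \<open>(x + y)\<^sup>m - x\<^sup>m - y\<^sup>m\<close> times the value with both seen, where \<open>x, y\<close> are the
  weights of \<open>i, j\<close>. Seeing both letters can only help, and for fixed \<open>x + y\<close> the sum
  \<open>x\<^sup>m + y\<^sup>m\<close> decreases as \<open>x, y\<close> are balanced. Hence balancing the weights of two
  real coupons, or moving weight from the null coupon \<open>0\<close> to a real coupon, decreases
  every \<open>P(T > t)\<close>; finitely many such moves turn \<open>p\<close> into \<open>v\<close> and \<open>v\<close> into \<open>u\<close>.
\<close>

definition words :: "'a set \<Rightarrow> nat \<Rightarrow> 'a list set" where
  "words A t = {xs. set xs \<subseteq> A \<and> length xs = t}"

lemma finite_words: "finite A \<Longrightarrow> finite (words A t)"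
  unfolding words_def by (rule finite_lists_length_eq)

lemma words_0 [simp]: "words A 0 = {[]}"
  unfolding words_def by auto

lemma sum_words_Suc:
  assumes "finite A"
  shows "(\<Sum>xs\<in>words A (Suc t). g xs) = (\<Sum>k\<in>A. \<Sum>xs\<in>words A t. g (k # xs))"
proof -
  have words: "words A (Suc t) = (\<lambda>(k, xs). k # xs) ` (A \<times> words A t)"
    unfolding words_def by (auto simp: length_Suc_conv image_iff)
  have inj: "inj_on (\<lambda>(k, xs). k # xs) (A \<times> words A t)"
    by (auto simp: inj_on_def)
  show ?thesis
    unfolding words sum.reindex[OF inj] comp_def
    by (subst sum.cartesian_product) (rule sum.cong, auto)
qed

text \<open>For a probability vector \<open>w\<close> on \<open>A\<close>, \<open>seen_sum w A t P\<close> is the expectation of \<open>P\<close>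
  applied to the set of letters seen in \<open>t\<close> independent draws.\<close>
definition seen_sum :: "('a \<Rightarrow> real) \<Rightarrow> 'a set \<Rightarrow> nat \<Rightarrow> ('a set \<Rightarrow> real) \<Rightarrow> real" where
  "seen_sum w A t P = (\<Sum>xs\<in>words A t. prod_list (map w xs) * P (set xs))"

lemma seen_sum_0 [simp]: "seen_sum w A 0 P = P {}"
  by (simp add: seen_sum_def)

lemma seen_sum_Suc:
  "finite A \<Longrightarrow> seen_sum w A (Suc t) P = (\<Sum>k\<in>A. w k * seen_sum w A t (\<lambda>S. P (insert k S)))"
  unfolding seen_sum_def by (simp add: sum_words_Suc sum_distrib_left mult.assoc)

lemma seen_sum_cong:
  assumes "\<And>k. k \<in> A \<Longrightarrow> w k = w' k"
  shows "seen_sum w A t P = seen_sum w' A t P"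
  unfolding seen_sum_def words_def
  by (intro sum.cong refl arg_cong2[where f="(*)"] arg_cong[where f=prod_list] map_cong)
     (auto intro: assms)

section \<open>Merging two letters\<close>

text \<open>A word in which the letter \<open>i\<close> occurs \<open>m\<close> times stands for the \<open>2^m\<close> words
  obtained by turning some of these occurrences into \<open>j\<close>: all of them stay \<open>i\<close>
  (weight \<open>x^m\<close>), all become \<open>j\<close> (weight \<open>y^m\<close>), or both letters occur.\<close>
definition merge_split ::
    "'a \<Rightarrow> 'a \<Rightarrow> real \<Rightarrow> real \<Rightarrow> ('a set \<Rightarrow> real) \<Rightarrow> 'a set \<Rightarrow> nat \<Rightarrow> real" where
  "merge_split i j x y P S m =
     (if i \<in> S then x^m * P S + y^m * P (insert j (S - {i}))
        + ((x + y)^m - x^m - y^m) * P (insert j S)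
      else P S)"

definition weight_except :: "'a \<Rightarrow> ('a \<Rightarrow> real) \<Rightarrow> 'a list \<Rightarrow> real" where
  "weight_except i w ys = prod_list (map (\<lambda>y. if y = i then 1 else w y) ys)"

lemma merge_split_insert_merged:
  assumes "i \<noteq> j" "i \<in> S \<longleftrightarrow> 0 < m"
  shows "merge_split i j x y P (insert i S) (Suc m)
       = x * merge_split i j x y (\<lambda>T. P (insert i T)) S m
       + y * merge_split i j x y (\<lambda>T. P (insert j T)) S m"
proof (cases "i \<in> S")
  case True
  then have "insert i (insert j (S - {i})) = insert j S" "insert i (insert j S) = insert j S"
    by auto
  with True assms show ?thesis
    by (simp add: merge_split_def insert_absorb insert_commute algebra_simps)
next
  case False
  with assms have "m = 0" "insert j (insert i S - {i}) = insert j S" by auto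
  with False show ?thesis by (simp add: merge_split_def algebra_simps)
qed

lemma merge_split_insert_other:
  assumes "k \<noteq> i" "k \<noteq> j"
  shows "merge_split i j x y P (insert k S) m = merge_split i j x y (\<lambda>T. P (insert k T)) S m"
proof -
  have "insert j (insert k S - {i}) = insert k (insert j (S - {i}))" using assms by auto
  with assms show ?thesis by (simp add: merge_split_def insert_commute)
qed

lemma weight_except_merge_split_Cons:
  assumes "i \<noteq> j"
  shows "weight_except i w (i # ys) * merge_split i j (w i) (w j) P (set (i # ys)) (count_list (i # ys) i)
       = w i * (weight_except i w ys * merge_split i j (w i) (w j) (\<lambda>S. P (insert i S)) (set ys) (count_list ys i))
       + w j * (weight_except i w ys * merge_split i j (w i) (w j) (\<lambda>S. P (insert j S)) (set ys) (count_list ys i))"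
proof -
  have "i \<in> set ys \<longleftrightarrow> 0 < count_list ys i"
    using count_list_0_iff[of ys i] by auto
  from merge_split_insert_merged[OF assms this] show ?thesis
    by (simp add: weight_except_def ring_distribs mult.left_commute)
qed

lemma seen_sum_merge:
  assumes A: "finite A" "i \<in> A" "j \<in> A" "i \<noteq> j"
  shows "seen_sum w A t P = (\<Sum>ys\<in>words (A - {j}) t.
           weight_except i w ys * merge_split i j (w i) (w j) P (set ys) (count_list ys i))"
    (is "_ = ?G t P")
proof (induction t arbitrary: P)
  case 0
  then show ?case by (simp add: weight_except_def merge_split_def)
next
  case (Suc t)
  let ?M = "merge_split i j (w i) (w j)"
  have A': "A - {j} = insert i (A - {i, j})" "i \<notin> A - {i, j}" "finite (A - {i, j})"
    using A by auto
  have "seen_sum w A (Suc t) P = (\<Sum>k\<in>A. w k * ?G t (\<lambda>S. P (insert k S)))"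
    using A by (simp add: seen_sum_Suc Suc.IH)
  also have "\<dots> = w i * ?G t (\<lambda>S. P (insert i S)) + w j * ?G t (\<lambda>S. P (insert j S))
      + (\<Sum>k\<in>A - {i, j}. w k * ?G t (\<lambda>S. P (insert k S)))"
    using A by (simp add: sum.remove[of A i] sum.remove[of "A - {i}" j] Diff_insert2[symmetric])
  also have "w i * ?G t (\<lambda>S. P (insert i S)) + w j * ?G t (\<lambda>S. P (insert j S))
      = (\<Sum>ys\<in>words (A - {j}) t. weight_except i w (i # ys) * ?M P (set (i # ys)) (count_list (i # ys) i))"
    unfolding sum_distrib_left sum.distrib[symmetric]
    by (intro sum.cong refl) (rule weight_except_merge_split_Cons[OF A(4), symmetric])
  also have "(\<Sum>k\<in>A - {i, j}. w k * ?G t (\<lambda>S. P (insert k S)))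
      = (\<Sum>k\<in>A - {i, j}. \<Sum>ys\<in>words (A - {j}) t.
           weight_except i w (k # ys) * ?M P (set (k # ys)) (count_list (k # ys) i))"
    unfolding sum_distrib_left
    by (intro sum.cong refl) (auto simp: weight_except_def merge_split_insert_other)
  also have "(\<Sum>ys\<in>words (A - {j}) t. weight_except i w (i # ys) * ?M P (set (i # ys)) (count_list (i # ys) i))
      + \<dots> = (\<Sum>k\<in>insert i (A - {i, j}). \<Sum>ys\<in>words (A - {j}) t.
           weight_except i w (k # ys) * ?M P (set (k # ys)) (count_list (k # ys) i))"
    by (rule sum.insert[OF A'(3,2), symmetric])
  also have "\<dots> = ?G (Suc t) P"
    using A by (simp only: A'(1)[symmetric] sum_words_Suc finite_Diff)
  finally show ?case .
qed

lemma seen_sum_le_of_merge_split_le: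
  assumes A: "finite A" "i \<in> A" "j \<in> A" "i \<noteq> j"
    and same: "\<And>k. k \<in> A \<Longrightarrow> k \<noteq> i \<Longrightarrow> k \<noteq> j \<Longrightarrow> w' k = w k"
    and nonneg: "\<And>k. k \<in> A \<Longrightarrow> 0 \<le> w k"
    and le: "\<And>S m. j \<notin> S \<Longrightarrow>
               merge_split i j (w' i) (w' j) P S m \<le> merge_split i j (w i) (w j) P S m"
  shows "seen_sum w' A t P \<le> seen_sum w A t P"
  unfolding seen_sum_merge[OF A]
proof (rule sum_mono)
  fix ys assume ys: "ys \<in> words (A - {j}) t"
  then have "weight_except i w' ys = weight_except i w ys" "0 \<le> weight_except i w ys" "j \<notin> set ys"
    unfolding weight_except_def words_def
    by (auto intro!: arg_cong[where f=prod_list] map_cong prod_list_nonneg same nonneg)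
  then show "weight_except i w' ys * merge_split i j (w' i) (w' j) P (set ys) (count_list ys i)
      \<le> weight_except i w ys * merge_split i j (w i) (w j) P (set ys) (count_list ys i)"
    by (simp add: mult_left_mono le)
qed

section \<open>Balancing the weights\<close>

lemma power_sum_le_of_balanced:
  fixes x x' y y' :: real
  assumes "0 \<le> x" "x \<le> x'" "x' \<le> y'" "x' + y' = x + y"
  shows "x' ^ m + y' ^ m \<le> x ^ m + y ^ m"
proof -
  have "(\<Sum>k<m. x ^ (m - Suc k) * x' ^ k) \<le> (\<Sum>k<m. y' ^ (m - Suc k) * y ^ k)"
    using assms by (intro sum_mono mult_mono power_mono) auto
  moreover have "x' - x = y - y'" "0 \<le> x' - x"
    using assms by auto
  ultimately have "(x' - x) * (\<Sum>k<m. x ^ (m - Suc k) * x' ^ k) \<le> (y - y') * (\<Sum>k<m. y' ^ (m - Suc k) * y ^ k)"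
    by (metis mult_left_mono)
  then show ?thesis
    using power_diff_sumr2[of x' m x] power_diff_sumr2[of y m y'] by linarith
qed

lemma merge_split_card_le_balanced:
  fixes g :: "nat \<Rightarrow> real"
  assumes g: "antimono g" and R: "finite R" "i \<in> R" "j \<in> R" "j \<notin> S"
    and sum: "x' + y' = x + y" and pow: "x' ^ m + y' ^ m \<le> x ^ m + y ^ m"
  shows "merge_split i j x' y' (\<lambda>S. g (card (S \<inter> R))) S m
       \<le> merge_split i j x y (\<lambda>S. g (card (S \<inter> R))) S m"
proof (cases "i \<in> S")
  case True
  let ?X = "g (card (S \<inter> R))" and ?Z = "g (card (insert j S \<inter> R))"
  have "insert j (S - {i}) \<inter> R = insert j (S \<inter> R - {i})"
    using R by auto
  then have "card (insert j (S - {i}) \<inter> R) = Suc (card (S \<inter> R - {i}))"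
    using R by (simp add: card_insert_disjoint)
  also have "\<dots> = card (S \<inter> R)"
    by (rule card_Suc_Diff1) (use R True in auto)
  finally have swap: "g (card (insert j (S - {i}) \<inter> R)) = ?X" by simp
  have "?Z \<le> ?X"
    using R by (intro antimonoD[OF g] card_mono) auto
  with pow have "(x' ^ m + y' ^ m) * (?X - ?Z) \<le> (x ^ m + y ^ m) * (?X - ?Z)"
    by (intro mult_right_mono) auto
  moreover have "merge_split i j a b (\<lambda>S. g (card (S \<inter> R))) S m
      = (a + b) ^ m * ?Z + (a ^ m + b ^ m) * (?X - ?Z)" for a b
    using True by (simp add: merge_split_def swap algebra_simps)
  ultimately show ?thesis by (simp add: sum)
qed (simp add: merge_split_def)

lemma merge_split_card_le_null:
  fixes g :: "nat \<Rightarrow> real"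
  assumes g: "antimono g" and R: "finite R" "i \<in> R" "j \<notin> R"
    and sum: "x' + y' = x + y" and y: "0 \<le> y'" "y' \<le> y"
  shows "merge_split i j x' y' (\<lambda>S. g (card (S \<inter> R))) S m
       \<le> merge_split i j x y (\<lambda>S. g (card (S \<inter> R))) S m"
proof (cases "i \<in> S")
  case True
  let ?X = "g (card (S \<inter> R))" and ?Y = "g (card (insert j (S - {i}) \<inter> R))"
  have null: "insert j T \<inter> R = T \<inter> R" for T
    using R by auto
  have "?X \<le> ?Y"
    using R by (intro antimonoD[OF g] card_mono) (auto simp: null)
  moreover have "y' ^ m \<le> y ^ m"
    using y by (intro power_mono)
  ultimately have "y' ^ m * (?Y - ?X) \<le> y ^ m * (?Y - ?X)"
    by (intro mult_right_mono) auto
  moreover have "merge_split i j a b (\<lambda>S. g (card (S \<inter> R))) S m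
      = (a + b) ^ m * ?X + b ^ m * (?Y - ?X)" for a b
    using True by (simp add: merge_split_def null algebra_simps)
  ultimately show ?thesis by (simp add: sum)
qed (simp add: merge_split_def)

lemma seen_sum_card_le_balanced:
  fixes g :: "nat \<Rightarrow> real"
  assumes g: "antimono g" and A: "finite A" "R \<subseteq> A" "i \<in> R" "j \<in> R" "i \<noteq> j"
    and nonneg: "\<forall>k\<in>A. 0 \<le> w k" and same: "\<forall>k\<in>A - {i, j}. w' k = w k"
    and sum: "w' i + w' j = w i + w j" and balanced: "w i \<le> w' i" "w' i \<le> w' j"
  shows "seen_sum w' A t (\<lambda>S. g (card (S \<inter> R))) \<le> seen_sum w A t (\<lambda>S. g (card (S \<inter> R)))"
proof (rule seen_sum_le_of_merge_split_le)
  fix S m assume "j \<notin> S"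
  moreover have "w' i ^ m + w' j ^ m \<le> w i ^ m + w j ^ m"
    using A nonneg by (intro power_sum_le_of_balanced sum balanced) auto
  ultimately show "merge_split i j (w' i) (w' j) (\<lambda>S. g (card (S \<inter> R))) S m
      \<le> merge_split i j (w i) (w j) (\<lambda>S. g (card (S \<inter> R))) S m"
    using A by (intro merge_split_card_le_balanced g sum) (auto intro: finite_subset)
qed (use A nonneg same in auto)

lemma seen_sum_card_le_null:
  fixes g :: "nat \<Rightarrow> real"
  assumes g: "antimono g" and A: "finite A" "R \<subseteq> A" "i \<in> R" "j \<in> A - R"
    and nonneg: "\<forall>k\<in>A. 0 \<le> w k" and same: "\<forall>k\<in>A - {i, j}. w' k = w k"
    and sum: "w' i + w' j = w i + w j" and shrink: "0 \<le> w' j" "w' j \<le> w j"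
  shows "seen_sum w' A t (\<lambda>S. g (card (S \<inter> R))) \<le> seen_sum w A t (\<lambda>S. g (card (S \<inter> R)))"
proof (rule seen_sum_le_of_merge_split_le)
  fix S m
  show "merge_split i j (w' i) (w' j) (\<lambda>S. g (card (S \<inter> R))) S m
      \<le> merge_split i j (w i) (w j) (\<lambda>S. g (card (S \<inter> R))) S m"
    using A by (intro merge_split_card_le_null g sum shrink) (auto intro: finite_subset)
qed (use A nonneg same in auto)

lemma exists_below_mean:
  fixes w :: "'a \<Rightarrow> real"
  assumes "finite R" "(\<Sum>k\<in>R. w k) = real (card R) * \<mu>" "\<exists>k\<in>R. w k \<noteq> \<mu>"
  shows "\<exists>i\<in>R. w i < \<mu>"
proof (rule ccontr)
  assume "\<not> (\<exists>i\<in>R. w i < \<mu>)"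
  with assms have "(\<Sum>k\<in>R. \<mu>) < (\<Sum>k\<in>R. w k)"
    by (intro sum_strict_mono_ex1) (auto simp: not_less order.order_iff_strict)
  with assms show False by simp
qed

lemma seen_sum_card_balance_step:
  fixes g :: "nat \<Rightarrow> real" and \<mu> :: real
  assumes g: "antimono g" and A: "finite A" "R \<subseteq> A"
    and nonneg: "\<forall>k\<in>A. 0 \<le> w k" and mean: "(\<Sum>k\<in>R. w k) = real (card R) * \<mu>"
    and unbalanced: "\<exists>k\<in>R. w k \<noteq> \<mu>"
  obtains w' where "\<forall>k\<in>A. 0 \<le> w' k" "(\<Sum>k\<in>R. w' k) = real (card R) * \<mu>"
    "{k\<in>R. w' k \<noteq> \<mu>} \<subset> {k\<in>R. w k \<noteq> \<mu>}" "\<forall>k. k \<notin> R \<longrightarrow> w' k = w k"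
    "seen_sum w' A t (\<lambda>S. g (card (S \<inter> R))) \<le> seen_sum w A t (\<lambda>S. g (card (S \<inter> R)))"
proof -
  have finR: "finite R" using A by (rule finite_subset[rotated])
  obtain i where i: "i \<in> R" "w i < \<mu>"
    using exists_below_mean[OF finR mean unbalanced] by blast
  obtain j where j: "j \<in> R" "\<mu> < w j"
    using exists_below_mean[of R "\<lambda>k. - w k" "- \<mu>"] finR mean unbalanced
    by (auto simp: sum_negf)
  define \<delta> where "\<delta> = min (\<mu> - w i) (w j - \<mu>)"
  define w' where "w' k = w k + (if k = i then \<delta> else 0) - (if k = j then \<delta> else 0)" for k
  have ij: "i \<noteq> j" using i j by auto
  have w'_ij: "w' i = w i + \<delta>" "w' j = w j - \<delta>" and w'_other: "\<And>k. k \<notin> {i, j} \<Longrightarrow> w' k = w k"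
    using ij by (auto simp: w'_def)
  have \<delta>: "0 < \<delta>" "w i + \<delta> \<le> \<mu>" "\<mu> \<le> w j - \<delta>" "w i + \<delta> = \<mu> \<or> w j - \<delta> = \<mu>"
    using i j by (auto simp: \<delta>_def min_def)
  show ?thesis
  proof (rule that[of w'])
    have "0 \<le> w i" using nonneg A i by auto
    with nonneg \<delta> show "\<forall>k\<in>A. 0 \<le> w' k"
      by (auto simp: w'_def)
    have "(\<Sum>k\<in>R. w' k) = (\<Sum>k\<in>R. w k)"
      using finR i j by (simp add: w'_def sum.distrib sum_subtractf sum.delta)
    with mean show "(\<Sum>k\<in>R. w' k) = real (card R) * \<mu>"
      by simp
    have "{k\<in>R. w' k \<noteq> \<mu>} \<subseteq> {k\<in>R. w k \<noteq> \<mu>}"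
      using i(2) j(2) w'_other by force
    moreover have "w' i = \<mu> \<or> w' j = \<mu>"
      using \<delta>(4) w'_ij by auto
    ultimately show "{k\<in>R. w' k \<noteq> \<mu>} \<subset> {k\<in>R. w k \<noteq> \<mu>}"
      using i j by auto
    show "\<forall>k. k \<notin> R \<longrightarrow> w' k = w k"
      using i(1) j(1) by (auto simp: w'_def)
    show "seen_sum w' A t (\<lambda>S. g (card (S \<inter> R))) \<le> seen_sum w A t (\<lambda>S. g (card (S \<inter> R)))"
      using i j ij \<delta> w'_ij w'_other
      by (intro seen_sum_card_le_balanced g A nonneg) auto
  qed
qed

lemma seen_sum_card_equalize_le:
  fixes g :: "nat \<Rightarrow> real" and \<mu> :: real
  assumes g: "antimono g" and A: "finite A" "R \<subseteq> A"
    and nonneg: "\<forall>k\<in>A. 0 \<le> w k" and mean: "(\<Sum>k\<in>R. w k) = real (card R) * \<mu>"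
  shows "seen_sum (\<lambda>k. if k \<in> R then \<mu> else w k) A t (\<lambda>S. g (card (S \<inter> R)))
       \<le> seen_sum w A t (\<lambda>S. g (card (S \<inter> R)))"
proof -
  have finR: "finite R" using A by (rule finite_subset[rotated])
  obtain N where "card {k\<in>R. w k \<noteq> \<mu>} = N" by blast
  then show ?thesis using nonneg mean
  proof (induction N arbitrary: w rule: less_induct)
    case (less N)
    show ?case
    proof (cases "\<exists>k\<in>R. w k \<noteq> \<mu>")
      case False
      then show ?thesis
        using seen_sum_cong[of A "\<lambda>k. if k \<in> R then \<mu> else w k" w] by auto
    next
      case True
      obtain w' where w': "\<forall>k\<in>A. 0 \<le> w' k" "(\<Sum>k\<in>R. w' k) = real (card R) * \<mu>"
        "{k\<in>R. w' k \<noteq> \<mu>} \<subset> {k\<in>R. w k \<noteq> \<mu>}" "\<forall>k. k \<notin> R \<longrightarrow> w' k = w k"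
        "seen_sum w' A t (\<lambda>S. g (card (S \<inter> R))) \<le> seen_sum w A t (\<lambda>S. g (card (S \<inter> R)))"
        using seen_sum_card_balance_step[OF g A less.prems(2,3) True] by blast
      have "card {k\<in>R. w' k \<noteq> \<mu>} < N"
        using w'(3) finR less.prems(1) by (auto intro: psubset_card_mono)
      moreover have "(\<lambda>k. if k \<in> R then \<mu> else w' k) = (\<lambda>k. if k \<in> R then \<mu> else w k)"
        using w'(4) by auto
      ultimately have "seen_sum (\<lambda>k. if k \<in> R then \<mu> else w k) A t (\<lambda>S. g (card (S \<inter> R)))
          \<le> seen_sum w' A t (\<lambda>S. g (card (S \<inter> R)))"
        using less.IH[OF _ refl w'(1,2)] by metis
      also note w'(5)
      finally show ?thesis .
    qed
  qed
qed

lemma seen_sum_card_fill_step: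
  fixes g :: "nat \<Rightarrow> real"
  assumes g: "antimono g" and A: "finite A" "R \<subseteq> A" "j \<in> A - R"
    and nonneg: "\<forall>k\<in>A. 0 \<le> w k" and grow: "\<forall>k\<in>R. w k \<le> w' k"
    and same: "\<forall>k\<in>A - insert j R. w' k = w k"
    and null: "0 \<le> w' j" and total: "w' j + (\<Sum>k\<in>R. w' k) = w j + (\<Sum>k\<in>R. w k)"
    and i: "i \<in> R" "w i < w' i"
  obtains w'' where "\<forall>k\<in>R. w k \<le> w'' k" "\<forall>k\<in>A - insert j R. w'' k = w k"
    "0 \<le> w'' j" "w'' j + (\<Sum>k\<in>R. w'' k) = w j + (\<Sum>k\<in>R. w k)"
    "{k\<in>R. w'' k \<noteq> w k} = {k\<in>R. w' k \<noteq> w k} - {i}"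
    "seen_sum w' A t (\<lambda>S. g (card (S \<inter> R))) \<le> seen_sum w'' A t (\<lambda>S. g (card (S \<inter> R)))"
proof -
  have finR: "finite R" using A(1,2) by (rule finite_subset[rotated])
  have ij: "i \<noteq> j" using i A by auto
  define d where "d = w' i - w i"
  define w'' where "w'' k = w' k + (if k = j then d else 0) - (if k = i then d else 0)" for k
  have d: "0 < d" using i by (simp add: d_def)
  have grow'': "\<forall>k\<in>R. w k \<le> w'' k"
    using grow A by (auto simp: w''_def d_def)
  have same'': "\<forall>k\<in>A - insert j R. w'' k = w k" and null'': "0 \<le> w'' j"
    using same null i d by (auto simp: w''_def)
  show ?thesis
  proof (rule that[OF grow'' same'' null''])
    have "(\<Sum>k\<in>R. w'' k) = (\<Sum>k\<in>R. w' k) - d"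
      using finR i A by (auto simp: w''_def sum.distrib sum_subtractf sum.delta)
    with total ij show "w'' j + (\<Sum>k\<in>R. w'' k) = w j + (\<Sum>k\<in>R. w k)"
      by (simp add: w''_def)
    show "{k\<in>R. w'' k \<noteq> w k} = {k\<in>R. w' k \<noteq> w k} - {i}"
      using A by (auto simp: w''_def d_def)
    have "0 \<le> w'' k" if "k \<in> A" for k
      using that nonneg grow'' same'' null'' by (cases "k \<in> R"; cases "k = j") force+
    then show "seen_sum w' A t (\<lambda>S. g (card (S \<inter> R))) \<le> seen_sum w'' A t (\<lambda>S. g (card (S \<inter> R)))"
      using null d i ij by (intro seen_sum_card_le_null[OF g A(1,2) i(1) A(3)]) (auto simp: w''_def d_def)
  qed
qed

lemma seen_sum_card_fill_from_null_le:
  fixes g :: "nat \<Rightarrow> real"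
  assumes g: "antimono g" and A: "finite A" "R \<subseteq> A" "j \<in> A - R"
    and nonneg: "\<forall>k\<in>A. 0 \<le> w k" and grow: "\<forall>k\<in>R. w k \<le> w' k"
    and same: "\<forall>k\<in>A - insert j R. w' k = w k"
    and null: "0 \<le> w' j" and total: "w' j + (\<Sum>k\<in>R. w' k) = w j + (\<Sum>k\<in>R. w k)"
  shows "seen_sum w' A t (\<lambda>S. g (card (S \<inter> R))) \<le> seen_sum w A t (\<lambda>S. g (card (S \<inter> R)))"
proof -
  have finR: "finite R" using A(1,2) by (rule finite_subset[rotated])
  obtain N where "card {k\<in>R. w' k \<noteq> w k} = N" by blast
  then show ?thesis using grow same null total
  proof (induction N arbitrary: w' rule: less_induct)
    case (less N)
    show ?case
    proof (cases "\<exists>k\<in>R. w' k \<noteq> w k")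
      case False
      then have "w' j = w j"
        using less.prems(5) by (simp cong: sum.cong)
      with False less.prems(3) have "\<forall>k\<in>A. w' k = w k"
        by blast
      then show ?thesis
        using seen_sum_cong[of A w' w] by auto
    next
      case True
      then obtain i where i: "i \<in> R" "w i < w' i"
        using less.prems(2) by force
      obtain w'' where w'': "\<forall>k\<in>R. w k \<le> w'' k" "\<forall>k\<in>A - insert j R. w'' k = w k"
        "0 \<le> w'' j" "w'' j + (\<Sum>k\<in>R. w'' k) = w j + (\<Sum>k\<in>R. w k)"
        "{k\<in>R. w'' k \<noteq> w k} = {k\<in>R. w' k \<noteq> w k} - {i}"
        "seen_sum w' A t (\<lambda>S. g (card (S \<inter> R))) \<le> seen_sum w'' A t (\<lambda>S. g (card (S \<inter> R)))"
        using seen_sum_card_fill_step[OF g A nonneg less.prems(2-5) i] by blast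
      have "card {k\<in>R. w'' k \<noteq> w k} < N"
        using w''(5) card_Diff1_less[of "{k\<in>R. w' k \<noteq> w k}" i] finR i less.prems(1) by simp
      note w''(6)
      also have "seen_sum w'' A t (\<lambda>S. g (card (S \<inter> R))) \<le> seen_sum w A t (\<lambda>S. g (card (S \<inter> R)))"
        by (rule less.IH[OF \<open>_ < N\<close> refl w''(1-4)])
      finally show ?thesis .
    qed
  qed
qed

section \<open>The expected waiting time as a series\<close>

abbreviation iid :: "'a pmf \<Rightarrow> (nat \<Rightarrow> 'a) measure" where
  "iid D \<equiv> \<Pi>\<^sub>M i\<in>UNIV. measure_pmf D"

definition cylinder :: "'a list \<Rightarrow> (nat \<Rightarrow> 'a) set" where
  "cylinder xs = {\<omega>. \<forall>i<length xs. \<omega> i = xs ! i}"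

lemma cylinder_eq_prod_emb:
  "cylinder xs = prod_emb UNIV (\<lambda>_. measure_pmf D) {..<length xs} (\<Pi>\<^sub>E i\<in>{..<length xs}. {xs ! i})"
  by (auto simp: cylinder_def prod_emb_iff space_PiM restrict_PiE_iff)

lemma cylinder_in_sets: "cylinder xs \<in> sets (iid D)"
  by (subst cylinder_eq_prod_emb[where D=D]) (rule sets_PiM_I, auto)

lemma emeasure_cylinder:
  "emeasure (iid D) (cylinder xs) = ennreal (prod_list (map (pmf D) xs))"
proof -
  have "emeasure (iid D) (cylinder xs)
      = (\<Prod>i<length xs. emeasure (measure_pmf D) {xs ! i})"
    unfolding cylinder_eq_prod_emb[where D=D]
    by (rule emeasure_PiM_emb) (auto simp: prob_space_measure_pmf)
  also have "\<dots> = ennreal (\<Prod>i<length xs. pmf D (xs ! i))"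
    by (simp add: emeasure_pmf_single prod_ennreal)
  finally show ?thesis
    by (simp add: prod.list_conv_set_nth atLeast0LessThan)
qed

lemma image_prefix_cylinder: "\<omega> \<in> cylinder xs \<Longrightarrow> \<omega> ` {..<length xs} = set xs"
  by (auto simp: cylinder_def set_conv_nth image_iff)

lemma mem_cylinder_prefix: "\<omega> \<in> cylinder (map \<omega> [0..<t])"
  by (simp add: cylinder_def)

lemma disjoint_cylinder: "length xs = length ys \<Longrightarrow> xs \<noteq> ys \<Longrightarrow> cylinder xs \<inter> cylinder ys = {}"
  by (auto simp: cylinder_def nth_equalityI)

lemma prefix_event_eq_UN_cylinder:
  "{\<omega>. Q (\<omega> ` {..<t})} = (\<Union>xs\<in>{xs. length xs = t \<and> Q (set xs)}. cylinder xs)"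
proof safe
  fix \<omega> assume "Q (\<omega> ` {..<t})"
  then show "\<omega> \<in> (\<Union>xs\<in>{xs. length xs = t \<and> Q (set xs)}. cylinder xs)"
    by (intro UN_I[of "map \<omega> [0..<t]"]) (auto simp: atLeast0LessThan mem_cylinder_prefix)
qed (simp add: image_prefix_cylinder)

lemma prefix_event_in_sets:
  fixes D :: "'a::countable pmf"
  shows "{\<omega>. Q (\<omega> ` {..<t})} \<in> sets (iid D)"
  unfolding prefix_event_eq_UN_cylinder
  by (rule sets.countable_UN'') (auto simp: cylinder_in_sets)

lemma AE_iid_in_set:
  assumes "\<And>k. k \<notin> A \<Longrightarrow> pmf D k = 0"
  shows "AE \<omega> in (iid D). \<forall>i. \<omega> i \<in> A"
proof -
  define N where "N i = prod_emb UNIV (\<lambda>_. measure_pmf D) {i} (\<Pi>\<^sub>E _\<in>{i}. - A)" for i :: nat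
  have "N i \<in> null_sets (iid D)" for i
  proof -
    have "emeasure (iid D) (N i) = emeasure (measure_pmf D) (- A)"
      unfolding N_def by (subst emeasure_PiM_emb) (auto simp: prob_space_measure_pmf)
    also have "\<dots> = 0"
      using assms by (subst measure_pmf.emeasure_eq_measure) (auto simp: measure_pmf_zero_iff set_pmf_eq)
    finally show ?thesis
      unfolding N_def by (auto intro: sets_PiM_I simp: null_sets_def)
  qed
  then have "(\<Union>i. N i) \<in> null_sets (iid D)"
    by (rule null_sets_UN)
  moreover have "{\<omega> \<in> space (iid D). \<not> (\<forall>i. \<omega> i \<in> A)} \<subseteq> (\<Union>i. N i)"
    by (auto simp: N_def prod_emb_def space_PiM restrict_def PiE_iff extensional_def)
  ultimately show ?thesis
    by (rule AE_I')
qed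

lemma emeasure_prefix_event:
  fixes D :: "'a::countable pmf"
  assumes A: "finite A" "\<And>k. k \<notin> A \<Longrightarrow> pmf D k = 0"
  shows "emeasure (iid D) {\<omega>. Q (\<omega> ` {..<t})}
       = ennreal (\<Sum>xs\<in>{xs\<in>words A t. Q (set xs)}. prod_list (map (pmf D) xs))"
proof -
  let ?W = "{xs\<in>words A t. Q (set xs)}"
  have fin: "finite ?W" using finite_words[OF A(1)] by simp
  have ae: "AE \<omega> in iid D. \<forall>i. \<omega> i \<in> A"
    using A(2) by (rule AE_iid_in_set)
  have "emeasure (iid D) {\<omega>. Q (\<omega> ` {..<t})} = emeasure (iid D) (\<Union>xs\<in>?W. cylinder xs)"
  proof (rule emeasure_eq_AE)
    show "AE \<omega> in iid D. (\<omega> \<in> {\<omega>. Q (\<omega> ` {..<t})}) = (\<omega> \<in> (\<Union>xs\<in>?W. cylinder xs))"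
      using ae
    proof eventually_elim
      case (elim \<omega>)
      have "set xs \<subseteq> A" if "\<omega> \<in> cylinder xs" for xs
        using elim image_prefix_cylinder[OF that, symmetric] by auto
      then show ?case
        unfolding prefix_event_eq_UN_cylinder by (auto simp: words_def)
    qed
  qed (use fin in \<open>auto intro: prefix_event_in_sets cylinder_in_sets\<close>)
  also have "\<dots> = (\<Sum>xs\<in>?W. emeasure (iid D) (cylinder xs))"
  proof (rule sum_emeasure[symmetric])
    show "disjoint_family_on cylinder ?W"
      unfolding disjoint_family_on_def words_def
      by (intro ballI impI disjoint_cylinder) auto
  qed (use fin cylinder_in_sets in auto)
  also have "\<dots> = ennreal (\<Sum>xs\<in>?W. prod_list (map (pmf D) xs))"
    by (simp add: emeasure_cylinder) (rule sum_ennreal, auto intro!: prod_list_nonneg)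
  finally show ?thesis .
qed

lemma Least_eq_suminf_not:
  fixes C :: "nat \<Rightarrow> bool"
  assumes mono: "\<And>t t'. C t \<Longrightarrow> t \<le> t' \<Longrightarrow> C t'"
  shows "(if \<exists>t. C t then of_nat (LEAST t. C t) else \<top>) = (\<Sum>t. if C t then 0 else 1 :: ennreal)"
proof (cases "\<exists>t. C t")
  case True
  define L where "L = (LEAST t. C t)"
  have "C t \<longleftrightarrow> L \<le> t" for t
    using mono[of L t] LeastI_ex[OF True] Least_le[of C t] unfolding L_def by auto
  then have "(\<Sum>t. if C t then 0 else 1 :: ennreal) = (\<Sum>t<L. 1)"
    by (subst suminf_finite[of "{..<L}"]) auto
  with True show ?thesis by (simp add: L_def)
next
  case False
  have "(\<Sum>t. 1 :: ennreal) = \<top>"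
    using ennreal_SUP_of_nat_eq_top by (simp add: suminf_eq_SUP)
  with False show ?thesis by simp
qed

lemma T_cn_eq_suminf:
  "T_cn c n \<omega> = (\<Sum>t. indicator {\<omega>. card (\<omega> ` {..<t} \<inter> {1..n}) < c} \<omega>)"
proof -
  have "T_cn c n \<omega> = (\<Sum>t. if c \<le> card (\<omega> ` {..<t} \<inter> {1..n}) then 0 else 1)"
    unfolding T_cn_def
  proof (rule Least_eq_suminf_not)
    fix t t' :: nat assume "c \<le> card (\<omega> ` {..<t} \<inter> {1..n})" "t \<le> t'"
    moreover have "card (\<omega> ` {..<t} \<inter> {1..n}) \<le> card (\<omega> ` {..<t'} \<inter> {1..n})"
      using \<open>t \<le> t'\<close> by (intro card_mono) auto
    ultimately show "c \<le> card (\<omega> ` {..<t'} \<inter> {1..n})" by linarith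
  qed
  also have "\<dots> = (\<Sum>t. indicator {\<omega>. card (\<omega> ` {..<t} \<inter> {1..n}) < c} \<omega>)"
    by (intro suminf_cong) (simp add: indicator_def not_le)
  finally show ?thesis .
qed

definition coupon_mass :: "nat \<Rightarrow> (nat \<Rightarrow> real) \<Rightarrow> nat \<Rightarrow> real" where
  "coupon_mass n q k = (if k = 0 then 1 - (\<Sum>j=1..n. q j) else if k \<le> n then q k else 0)"

lemma coupon_mass_total: "coupon_mass n q 0 + (\<Sum>k=1..n. coupon_mass n q k) = 1"
proof -
  have "(\<Sum>k=1..n. coupon_mass n q k) = (\<Sum>k=1..n. q k)"
    by (rule sum.cong) (auto simp: coupon_mass_def)
  then show ?thesis by (simp add: coupon_mass_def)
qed

lemma pmf_coupon_dist:
  assumes "\<forall>i\<in>{1..n}. 0 \<le> q i" "(\<Sum>i=1..n. q i) \<le> 1"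
  shows "pmf (coupon_dist n q) = coupon_mass n q"
proof -
  have nonneg: "0 \<le> coupon_mass n q k" for k
    using assms by (auto simp: coupon_mass_def)
  have "{0..n} = insert 0 {1..n}" by auto
  then have "(\<Sum>k\<in>{0..n}. coupon_mass n q k) = 1"
    using coupon_mass_total[of n q] by simp
  moreover have "(\<integral>\<^sup>+k. ennreal (coupon_mass n q k) \<partial>count_space UNIV)
      = ennreal (\<Sum>k\<in>{0..n}. coupon_mass n q k)"
    using nonneg by (subst nn_integral_count_space') (auto simp: coupon_mass_def)
  moreover have "coupon_dist n q = embed_pmf (coupon_mass n q)"
    unfolding coupon_dist_def coupon_mass_def[abs_def] ..
  ultimately show ?thesis
    using nonneg by (intro ext) (simp add: pmf_embed_pmf)
qed

lemma ET_eq_suminf_seen_sum: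
  assumes "\<forall>i\<in>{1..n}. 0 \<le> q i" "(\<Sum>i=1..n. q i) \<le> 1"
  shows "ET c n q = (\<Sum>t. ennreal (seen_sum (coupon_mass n q) {0..n} t
                                      (\<lambda>S. of_bool (card (S \<inter> {1..n}) < c))))"
proof -
  let ?E = "\<lambda>t. {\<omega>. card (\<omega> ` {..<t} \<inter> {1..n}) < c}"
  have "ET c n q = (\<Sum>t. emeasure (draws n q) (?E t))"
    using prefix_event_in_sets[where Q="\<lambda>S. card (S \<inter> {1..n}) < c"]
    unfolding ET_def T_cn_eq_suminf draws_def
    by (subst nn_integral_suminf) (auto intro: suminf_cong)
  also have "\<dots> = (\<Sum>t. ennreal (seen_sum (coupon_mass n q) {0..n} t
                                      (\<lambda>S. of_bool (card (S \<inter> {1..n}) < c))))"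
  proof (rule suminf_cong)
    fix t
    have "emeasure (draws n q) (?E t) = ennreal (\<Sum>xs\<in>{xs\<in>words {0..n} t. card (set xs \<inter> {1..n}) < c}.
                                               prod_list (map (coupon_mass n q) xs))"
      unfolding draws_def pmf_coupon_dist[OF assms, symmetric]
      by (rule emeasure_prefix_event) (auto simp: pmf_coupon_dist[OF assms] coupon_mass_def)
    also have "(\<Sum>xs\<in>{xs\<in>words {0..n} t. card (set xs \<inter> {1..n}) < c}.
                  prod_list (map (coupon_mass n q) xs))
        = seen_sum (coupon_mass n q) {0..n} t (\<lambda>S. of_bool (card (S \<inter> {1..n}) < c))"
      unfolding seen_sum_def sum.inter_filter[OF finite_words[OF finite_atLeastAtMost]]
      by (rule sum.cong) auto
    finally show "emeasure (draws n q) (?E t) = ennreal (seen_sum (coupon_mass n q) {0..n} t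
                                      (\<lambda>S. of_bool (card (S \<inter> {1..n}) < c)))" .
  qed
  finally show ?thesis .
qed

lemma ET_le_of_seen_sum_le:
  assumes "\<forall>i\<in>{1..n}. 0 \<le> q i" "(\<Sum>i=1..n. q i) \<le> 1"
    and "\<forall>i\<in>{1..n}. 0 \<le> q' i" "(\<Sum>i=1..n. q' i) \<le> 1"
    and "\<And>t. seen_sum (coupon_mass n q) {0..n} t (\<lambda>S. of_bool (card (S \<inter> {1..n}) < c))
            \<le> seen_sum (coupon_mass n q') {0..n} t (\<lambda>S. of_bool (card (S \<inter> {1..n}) < c))"
  shows "ET c n q \<le> ET c n q'"
  unfolding ET_eq_suminf_seen_sum[OF assms(1,2)] ET_eq_suminf_seen_sum[OF assms(3,4)]
  by (intro suminf_le summableI ennreal_leI assms(5))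

theorem theorem2:
  fixes n c :: nat and p :: "nat \<Rightarrow> real"
  assumes "n \<ge> 1"
    and "c \<in> {1..n}"
    and "\<forall>i\<in>{1..n}. 0 < p i \<and> p i < 1"
    and "(\<Sum>i=1..n. p i) \<le> 1"
  shows "ET c n p \<ge> ET c n (\<lambda>i. (1 - (1 - (\<Sum>j=1..n. p j))) / real n)
       \<and> ET c n (\<lambda>i. (1 - (1 - (\<Sum>j=1..n. p j))) / real n) \<ge> ET c n (\<lambda>i. 1 / real n)"
proof
  let ?s = "\<Sum>j=1..n. p j" and ?P = "\<lambda>S. of_bool (card (S \<inter> {1..n}) < c) :: real"
  let ?v = "\<lambda>i. (1 - (1 - ?s)) / real n" and ?u = "\<lambda>i. 1 / real n"
  have n: "0 < real n" and p: "\<forall>i\<in>{1..n}. 0 \<le> p i"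
    and g: "antimono (\<lambda>k. of_bool (k < c) :: real)"
    using assms(1,3) by (auto simp: antimono_def)
  then have s: "0 \<le> ?s" by (intro sum_nonneg) auto
  show "ET c n ?v \<le> ET c n p"
  proof (rule ET_le_of_seen_sum_le)
    fix t
    have "seen_sum (coupon_mass n ?v) {0..n} t ?P
        = seen_sum (\<lambda>k. if k \<in> {1..n} then ?s / real n else coupon_mass n p k) {0..n} t ?P"
      using n by (intro seen_sum_cong) (auto simp: coupon_mass_def)
    also have "\<dots> \<le> seen_sum (coupon_mass n p) {0..n} t ?P"
      using n p assms(4)
      by (intro seen_sum_card_equalize_le[OF g]) (auto simp: coupon_mass_def)
    finally show "seen_sum (coupon_mass n ?v) {0..n} t ?P \<le> seen_sum (coupon_mass n p) {0..n} t ?P" .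
  qed (use n p s assms(4) in auto)
  show "ET c n ?u \<le> ET c n ?v"
  proof (rule ET_le_of_seen_sum_le)
    fix t
    show "seen_sum (coupon_mass n ?u) {0..n} t ?P \<le> seen_sum (coupon_mass n ?v) {0..n} t ?P"
      using n s assms(4) coupon_mass_total[of n ?u] coupon_mass_total[of n ?v]
      by (intro seen_sum_card_fill_from_null_le[OF g, where j=0])
         (auto simp: coupon_mass_def divide_right_mono)
  qed (use n s assms(4) in auto)
qed

end
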